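(* Let $A=(\Sigma,q,N,\delta)$ be a simple LQCA with $|N|=r\ge2$. Then the columns $U_A(\cdot,c)$, $c\in\mathcal C_A$, are pairwise orthogonal (i.e. $\langle U_A(\cdot,c),U_A(\cdot,c')\rangle=0$ for all $c\neq c'$) if and only if $p_1=p_2$ for every $q$-cycle $p$ of the graph $H_A$.
   Context: A linear quantum cellular automaton (LQCA) is a tuple $A=(\Sigma,q,N,\delta)$ where $\Sigma$ is a finite nonempty set of states, $N=(a_1,\dots,a_r)$ is a strictly increasing sequence of integers, $\delta:\Sigma^r\to\mathbb C^\Sigma$ satisfies $\|\delta(w)\|>0$ for all $w$, and $q\in\Sigma$ satisfies $[\delta(q,\dots,q)](x)=1$ if $x=q$ and $0$ otherwise. It is simple if $a_r-a_1=r-1$. On $\mathbb C^\Sigma$, $\langle u,v\rangle=\sum_x u(x)\overline{v(x)}$, and $u\perp v$ means $\langle u,v\rangle=0$. A configuration is a map $c:\mathbb Z\to\Sigma$ with $c_i\ne q$ for only finitely many $i$; $\mathcal C_A$ is the set of configurations. With $c_{i+N}=(c_{i+a_1},\dots,c_{i+a_r})$, $U_A(d,c)=\prod_{i\in\mathbb Z}[\delta(c_{i+N})](d_i)$; $U_A(\cdot,c)$ is the column $d\mapsto U_A(d,c)$ in $\ell_2(\mathcal C_A)$ with inner product $\langle u,v\rangle=\sum_d u(d)\overline{v(d)}$. The directed graph $H_A=(V,E)$ has $V=\Sigma^{r-1}\times\Sigma^{r-1}$ and $E=\{((x_1z_1,x_2z_2),(z_1y_1,z_2y_2)):x_1,x_2,y_1,y_2\in\Sigma,\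 z_1,z_2\in\Sigma^{r-2},\ \delta(x_1z_1y_1)\not\perp\delta(x_2z_2y_2)\}$. A path $p=((u_0,v_0),\dots,(u_k,v_k))$ in $H_A$ is a cycle if $k>0$ and $(u_0,v_0)=(u_k,v_k)$, and a $q$-cycle if moreover $(u_0,v_0)=(q^{r-1},q^{r-1})$; $p_1=(u_0,\dots,u_k)$ and $p_2=(v_0,\dots,v_k)$. *)

theory Defs
  imports "HOL-Analysis.Analysis" "HOL-Library.Groups_Big_Fun"
begin

definition vinner :: "('s::finite \<Rightarrow> complex) \<Rightarrow> ('s \<Rightarrow> complex) \<Rightarrow> complex" where
  "vinner u v = (\<Sum>x\<in>UNIV. u x * cnj (v x))"

definition vnorm :: "('s::finite \<Rightarrow> complex) \<Rightarrow> real" where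
  "vnorm u = sqrt (\<Sum>x\<in>UNIV. (cmod (u x))\<^sup>2)"

definition is_lqca :: "'s::finite \<Rightarrow> int list \<Rightarrow> ('s list \<Rightarrow> 's \<Rightarrow> complex) \<Rightarrow> bool" where
  "is_lqca q N \<delta> \<longleftrightarrow>
     N \<noteq> [] \<and> sorted_wrt (<) N \<and>
     (\<forall>w. length w = length N \<longrightarrow> vnorm (\<delta> w) > 0) \<and>
     (\<forall>x. \<delta> (replicate (length N) q) x = (if x = q then 1 else 0))"

definition simple_nbhd :: "int list \<Rightarrow> bool" where
  "simple_nbhd N \<longleftrightarrow> last N - hd N = int (length N) - 1"

definition configs :: "'s \<Rightarrow> (int \<Rightarrow> 's) set" where
  "configs q = {c. finite {i. c i \<noteq> q}}"

definition nbhd :: "(int \<Rightarrow> 's) \<Rightarrow> int list \<Rightarrow> int \<Rightarrow> 's list" where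
  "nbhd c N i = map (\<lambda>a. c (i + a)) N"

text \<open>U_A(d,c) = prod over i in Z of delta(c_{i+N})(d_i); for configurations only
  finitely many factors differ from 1, so this is the product over those (Prod_any).\<close>
definition U :: "int list \<Rightarrow> ('s list \<Rightarrow> 's \<Rightarrow> complex) \<Rightarrow> (int \<Rightarrow> 's) \<Rightarrow> (int \<Rightarrow> 's) \<Rightarrow> complex" where
  "U N \<delta> d c = Prod_any (\<lambda>i. \<delta> (nbhd c N i) (d i))"

definition col_inner :: "'s \<Rightarrow> int list \<Rightarrow> ('s list \<Rightarrow> 's \<Rightarrow> complex) \<Rightarrow> (int \<Rightarrow> 's) \<Rightarrow> (int \<Rightarrow> 's) \<Rightarrow> complex" where
  "col_inner q N \<delta> c c' = infsum (\<lambda>d. U N \<delta> d c * cnj (U N \<delta> d c')) (configs q)"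

definition H_edge :: "int list \<Rightarrow> ('s::finite list \<Rightarrow> 's \<Rightarrow> complex) \<Rightarrow> ('s list \<times> 's list) \<Rightarrow> ('s list \<times> 's list) \<Rightarrow> bool" where
  "H_edge N \<delta> u v \<longleftrightarrow>
     (\<exists>x1 x2 y1 y2 z1 z2. length z1 = length N - 2 \<and> length z2 = length N - 2 \<and>
        u = (x1 # z1, x2 # z2) \<and> v = (z1 @ [y1], z2 @ [y2]) \<and>
        vinner (\<delta> (x1 # z1 @ [y1])) (\<delta> (x2 # z2 @ [y2])) \<noteq> 0)"

definition H_path :: "int list \<Rightarrow> ('s::finite list \<Rightarrow> 's \<Rightarrow> complex) \<Rightarrow> ('s list \<times> 's list) list \<Rightarrow> bool" where
  "H_path N \<delta> p \<longleftrightarrow> p \<noteq> [] \<and>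
     (\<forall>i. i + 1 < length p \<longrightarrow> H_edge N \<delta> (p ! i) (p ! (i + 1)))"

definition q_cycle :: "'s::finite \<Rightarrow> int list \<Rightarrow> ('s list \<Rightarrow> 's \<Rightarrow> complex) \<Rightarrow> ('s list \<times> 's list) list \<Rightarrow> bool" where
  "q_cycle q N \<delta> p \<longleftrightarrow> H_path N \<delta> p \<and> length p \<ge> 2 \<and>
     hd p = (replicate (length N - 1) q, replicate (length N - 1) q) \<and> last p = hd p"

end

theory Submission
  imports Defs
begin

text \<open>For configurations \<open>c, c'\<close> all but finitely many cells see the quiescent
  neighbourhood in both, where \<open>\<delta>\<close> is the unit vector at \<open>q\<close>. Hence the inner product of
  the columns of \<open>c\<close> and \<open>c'\<close> is the finite product over the cells \<open>i\<close> of the local inner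
  products \<open>\<langle>\<delta>(c\<^sub>i\<^sub>+\<^sub>N), \<delta>(c'\<^sub>i\<^sub>+\<^sub>N)\<rangle>\<close>. For a simple neighbourhood the factor at a cell is
  nonzero exactly when the pairs of \<open>(r-1)\<close>-windows of \<open>c, c'\<close> at two adjacent
  positions form an edge of \<open>H\<^sub>A\<close>. So the two columns are non-orthogonal iff the window
  pairs form a bi-infinite walk in \<open>H\<^sub>A\<close>. Such a walk stays at \<open>(q\<^sup>r\<^sup>-\<^sup>1, q\<^sup>r\<^sup>-\<^sup>1)\<close> outside a
  finite interval, so it is a \<open>q\<close>-cycle padded by the loop at that vertex, and conversely
  every padded \<open>q\<close>-cycle is the walk of the configurations read off from the first
  letters of its vertices. Under this correspondence \<open>c \<noteq> c'\<close> means \<open>p\<^sub>1 \<noteq> p\<^sub>2\<close>.\<close>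

lemma sum_prod_fixed_outside:
  fixes g :: "'i \<Rightarrow> 's::finite \<Rightarrow> 'a::comm_semiring_1"
  assumes I: "finite I"
  shows "(\<Sum>d\<in>{d. \<forall>i. i \<notin> I \<longrightarrow> d i = q}. \<Prod>i\<in>I. g i (d i)) = (\<Prod>i\<in>I. \<Sum>x\<in>UNIV. g i x)"
proof -
  let ?D = "{d. \<forall>i. i \<notin> I \<longrightarrow> d i = q}"
  have "bij_betw (\<lambda>d. restrict d I) ?D (PiE I (\<lambda>_. UNIV))"
  proof (rule bij_betw_imageI)
    show "inj_on (\<lambda>d. restrict d I) ?D"
    proof (rule inj_onI)
      fix d d' assume d: "d \<in> ?D" and d': "d' \<in> ?D" and eq: "restrict d I = restrict d' I"
      show "d = d'"
      proof
        fix i show "d i = d' i"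
        proof (cases "i \<in> I")
          case True
          then show ?thesis using fun_cong[OF eq, of i] by simp
        qed (use d d' in simp)
      qed
    qed
    show "(\<lambda>d. restrict d I) ` ?D = PiE I (\<lambda>_. UNIV)"
    proof (intro equalityI subsetI)
      fix e :: "'i \<Rightarrow> 's" assume e: "e \<in> PiE I (\<lambda>_. UNIV)"
      show "e \<in> (\<lambda>d. restrict d I) ` ?D"
      proof (rule image_eqI)
        show "e = restrict (\<lambda>i. if i \<in> I then e i else q) I"
          using e by (auto simp: PiE_iff extensional_def)
      qed simp
    qed auto
  qed
  then have "(\<Sum>d\<in>?D. \<Prod>i\<in>I. g i (restrict d I i)) = (\<Sum>e\<in>PiE I (\<lambda>_. UNIV). \<Prod>i\<in>I. g i (e i))"
    by (rule sum.reindex_bij_betw)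
  also have "\<dots> = (\<Prod>i\<in>I. \<Sum>x\<in>UNIV. g i x)"
    by (rule prod_sum_PiE[symmetric]) (use I in auto)
  finally show ?thesis by simp
qed

lemma Prod_any_fixed_outside:
  fixes f :: "'i \<Rightarrow> 's \<Rightarrow> 'a::comm_semiring_1"
  assumes I: "finite I" and f: "\<And>i x. i \<notin> I \<Longrightarrow> f i x = (if x = q then 1 else 0)"
    and d: "finite {i. d i \<noteq> q}"
  shows "Prod_any (\<lambda>i. f i (d i)) = (if \<forall>i. i \<notin> I \<longrightarrow> d i = q then \<Prod>i\<in>I. f i (d i) else 0)"
proof -
  let ?T = "I \<union> {i. d i \<noteq> q}"
  have T: "finite ?T" using I d by simp
  have "Prod_any (\<lambda>i. f i (d i)) = (\<Prod>i\<in>?T. f i (d i))"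
    by (rule Prod_any.expand_superset[OF T]) (use f in auto)
  moreover have "?T = I" if "\<forall>i. i \<notin> I \<longrightarrow> d i = q" using that by auto
  moreover have "(\<Prod>i\<in>?T. f i (d i)) = 0" if "i \<notin> I" "d i \<noteq> q" for i
    using that f T by (metis (mono_tags) UnI2 mem_Collect_eq prod_zero)
  ultimately show ?thesis by auto
qed

lemma infsum_Prod_any_cnj_eq_prod_vinner:
  fixes f g :: "'i \<Rightarrow> 's::finite \<Rightarrow> complex"
  assumes I: "finite I"
    and f_q: "\<And>i x. i \<notin> I \<Longrightarrow> f i x = (if x = q then 1 else 0)"
    and g_q: "\<And>i x. i \<notin> I \<Longrightarrow> g i x = (if x = q then 1 else 0)"
  shows "(\<Sum>\<^sub>\<infinity>d\<in>{d. finite {i. d i \<noteq> q}}. Prod_any (\<lambda>i. f i (d i)) * cnj (Prod_any (\<lambda>i. g i (d i))))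
       = (\<Prod>i\<in>I. vinner (f i) (g i))"
proof -
  let ?D = "{d. \<forall>i. i \<notin> I \<longrightarrow> d i = q}"
  have D: "finite ?D"
  proof (rule finite_subset)
    show "?D \<subseteq> (\<lambda>e i. if i \<in> I then e i else q) ` PiE I (\<lambda>_. UNIV)"
      by (auto intro!: image_eqI[where x = "restrict _ I"])
  qed (use I in \<open>simp add: finite_PiE\<close>)
  have summand: "Prod_any (\<lambda>i. f i (d i)) * cnj (Prod_any (\<lambda>i. g i (d i)))
      = (if d \<in> ?D then \<Prod>i\<in>I. f i (d i) * cnj (g i (d i)) else 0)"
    if d: "finite {i. d i \<noteq> q}" for d :: "'i \<Rightarrow> 's"
  proof -
    have "Prod_any (\<lambda>i. f i (d i)) = (if d \<in> ?D then \<Prod>i\<in>I. f i (d i) else 0)"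
      using I f_q d by (simp add: Prod_any_fixed_outside)
    moreover have "Prod_any (\<lambda>i. g i (d i)) = (if d \<in> ?D then \<Prod>i\<in>I. g i (d i) else 0)"
      using I g_q d by (simp add: Prod_any_fixed_outside)
    ultimately show ?thesis by (auto simp: prod.distrib)
  qed
  have "(\<Sum>\<^sub>\<infinity>d\<in>{d. finite {i. d i \<noteq> q}}. Prod_any (\<lambda>i. f i (d i)) * cnj (Prod_any (\<lambda>i. g i (d i))))
      = (\<Sum>\<^sub>\<infinity>d\<in>?D. \<Prod>i\<in>I. f i (d i) * cnj (g i (d i)))"
    by (rule infsum_cong_neutral) (use I in \<open>auto simp: summand intro: finite_subset[of _ I]\<close>)
  also have "\<dots> = (\<Sum>d\<in>?D. \<Prod>i\<in>I. f i (d i) * cnj (g i (d i)))"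
    using D by simp
  also have "\<dots> = (\<Prod>i\<in>I. vinner (f i) (g i))"
    using sum_prod_fixed_outside[OF I, of "\<lambda>i x. f i x * cnj (g i x)" q] by (simp add: vinner_def)
  finally show ?thesis .
qed

lemma vinner_quiescent:
  "vinner (\<lambda>x::'s::finite. if x = q then 1 else 0) (\<lambda>x. if x = q then 1 else 0) = 1"
  unfolding vinner_def by (simp add: if_distrib cong: if_cong)

lemma is_lqca_quiescent:
  "is_lqca q N \<delta> \<Longrightarrow> \<delta> (replicate (length N) q) = (\<lambda>x. if x = q then 1 else 0)"
  by (auto simp: is_lqca_def)

lemma finite_nonquiescent_nbhds:
  assumes "c \<in> configs q"
  shows "finite {i. nbhd c N i \<noteq> replicate (length N) q}"
proof (rule finite_subset)
  show "{i. nbhd c N i \<noteq> replicate (length N) q} \<subseteq> (\<Union>a\<in>set N. (\<lambda>t. t - a) ` {t. c t \<noteq> q})"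
    by (force simp: nbhd_def map_replicate_const[symmetric])
  show "finite (\<Union>a\<in>set N. (\<lambda>t. t - a) ` {t. c t \<noteq> q})"
    using assms by (simp add: configs_def)
qed

lemma col_inner_eq_0_iff:
  assumes L: "is_lqca q N \<delta>" and c: "c \<in> configs q" and c': "c' \<in> configs q"
  shows "col_inner q N \<delta> c c' = 0 \<longleftrightarrow> (\<exists>i. vinner (\<delta> (nbhd c N i)) (\<delta> (nbhd c' N i)) = 0)"
proof -
  let ?v = "\<lambda>i. vinner (\<delta> (nbhd c N i)) (\<delta> (nbhd c' N i))"
  let ?I = "{i. nbhd c N i \<noteq> replicate (length N) q} \<union> {i. nbhd c' N i \<noteq> replicate (length N) q}"
  have I: "finite ?I"
    using finite_nonquiescent_nbhds[OF c] finite_nonquiescent_nbhds[OF c'] by simp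
  have outside: "?v i = 1" if "i \<notin> ?I" for i
    using that vinner_quiescent[of q] by (simp add: is_lqca_quiescent[OF L])
  have "col_inner q N \<delta> c c' = (\<Prod>i\<in>?I. ?v i)"
    unfolding col_inner_def U_def configs_def
    by (rule infsum_Prod_any_cnj_eq_prod_vinner[OF I]) (auto simp: is_lqca_quiescent[OF L])
  also have "\<dots> = 0 \<longleftrightarrow> (\<exists>i\<in>?I. ?v i = 0)"
    using I by simp
  also have "\<dots> \<longleftrightarrow> (\<exists>i. ?v i = 0)"
    using outside by fastforce
  finally show ?thesis .
qed

definition window :: "(int \<Rightarrow> 's) \<Rightarrow> int \<Rightarrow> nat \<Rightarrow> 's list" where
  "window c j n = map (\<lambda>k. c (j + int k)) [0..<n]"

lemma length_window [simp]: "length (window c j n) = n"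
  by (simp add: window_def)

lemma nth_window [simp]: "k < n \<Longrightarrow> window c j n ! k = c (j + int k)"
  by (simp add: window_def)

lemma window_Suc_Cons: "window c j (Suc n) = c j # window c (j + 1) n"
  by (rule nth_equalityI) (auto simp: nth_Cons' algebra_simps)

lemma window_Suc_snoc: "window c j (Suc n) = window c j n @ [c (j + int n)]"
  by (simp add: window_def)

lemma window_eq_replicate: "(\<And>k. k < n \<Longrightarrow> c (j + int k) = q) \<Longrightarrow> window c j n = replicate n q"
  by (rule nth_equalityI) auto

lemma simple_nbhd_eq_upto:
  assumes sorted: "sorted_wrt (<) N" and simple: "simple_nbhd N" and "N \<noteq> []"
  shows "N = [hd N..last N]"
proof (rule sorted_distinct_set_unique)
  show "sorted N" "distinct N" using sorted by (simp_all add: strict_sorted_iff)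
  have "set N \<subseteq> {hd N..last N}"
  proof
    fix x assume "x \<in> set N"
    then obtain k where "k < length N" "x = N ! k" by (auto simp: in_set_conv_nth)
    then show "x \<in> {hd N..last N}"
      using \<open>sorted N\<close> \<open>N \<noteq> []\<close> by (auto simp: hd_conv_nth last_conv_nth intro: sorted_nth_mono)
  qed
  moreover have "card {hd N..last N} = card (set N)"
    using simple \<open>distinct N\<close> by (simp add: simple_nbhd_def distinct_card)
  ultimately show "set N = set [hd N..last N]"
    by (simp add: card_subset_eq)
qed simp_all

lemma nbhd_eq_window:
  assumes "is_lqca q N \<delta>" and "simple_nbhd N"
  shows "nbhd c N i = window c (i + hd N) (length N)"
proof -
  have N: "N = [hd N..last N]"
    using assms by (intro simple_nbhd_eq_upto) (auto simp: is_lqca_def)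
  have nth_N: "N ! k = hd N + int k" if "k < length N" for k
  proof -
    have "hd N + int k \<le> last N"
      using that arg_cong[OF N, of length] by simp
    then have "[hd N..last N] ! k = hd N + int k"
      by (rule nth_upto)
    moreover have "N ! k = [hd N..last N] ! k"
      using N by (rule arg_cong[where f = "\<lambda>xs. xs ! k"])
    ultimately show ?thesis by simp
  qed
  show ?thesis
    by (rule nth_equalityI) (simp_all add: nbhd_def nth_N algebra_simps)
qed

definition window_pair :: "(int \<Rightarrow> 's) \<Rightarrow> (int \<Rightarrow> 's) \<Rightarrow> nat \<Rightarrow> int \<Rightarrow> 's list \<times> 's list" where
  "window_pair c c' n j = (window c j n, window c' j n)"

definition H_walk :: "int list \<Rightarrow> ('s::finite list \<Rightarrow> 's \<Rightarrow> complex) \<Rightarrow> (int \<Rightarrow> 's list \<times> 's list) \<Rightarrow> bool" where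
  "H_walk N \<delta> P \<longleftrightarrow> (\<forall>j. H_edge N \<delta> (P j) (P (j + 1)))"

lemma H_edge_window_pair_iff:
  assumes "length N \<ge> 2"
  shows "H_edge N \<delta> (window_pair c c' (length N - 1) j) (window_pair c c' (length N - 1) (j + 1)) \<longleftrightarrow>
         vinner (\<delta> (window c j (length N))) (\<delta> (window c' j (length N))) \<noteq> 0"
proof -
  obtain m where m: "length N = Suc (Suc m)"
    using assms by (metis add_2_eq_Suc le_Suc_ex)
  have "window d j (Suc (Suc m)) = d j # window d (j + 1) m @ [d (j + 1 + int m)]" for d :: "int \<Rightarrow> 's"
    by (simp only: window_Suc_Cons[of d j] window_Suc_snoc[of d "j + 1" m] append_Cons)
  note windows = this window_Suc_Cons[of _ j m] window_Suc_snoc[of _ "j + 1" m]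
  show ?thesis
    unfolding H_edge_def window_pair_def m diff_Suc_1 windows by auto
qed

lemma col_inner_ne_0_iff_H_walk:
  assumes L: "is_lqca q N \<delta>" and "simple_nbhd N" and r: "length N \<ge> 2"
    and c: "c \<in> configs q" and c': "c' \<in> configs q"
  shows "col_inner q N \<delta> c c' \<noteq> 0 \<longleftrightarrow> H_walk N \<delta> (window_pair c c' (length N - 1))"
proof -
  let ?v = "\<lambda>j. vinner (\<delta> (window c j (length N))) (\<delta> (window c' j (length N)))"
  have "col_inner q N \<delta> c c' \<noteq> 0 \<longleftrightarrow> (\<forall>i. ?v (i + hd N) \<noteq> 0)"
    by (simp add: col_inner_eq_0_iff[OF L c c'] nbhd_eq_window[OF L \<open>simple_nbhd N\<close>])
  also have "\<dots> \<longleftrightarrow> (\<forall>j. ?v j \<noteq> 0)"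
    by (metis diff_add_cancel)
  also have "\<dots> \<longleftrightarrow> H_walk N \<delta> (window_pair c c' (length N - 1))"
    by (simp only: H_walk_def H_edge_window_pair_iff[OF r])
  finally show ?thesis .
qed

lemma window_of_shifting_words:
  assumes len: "\<And>j. length (L j) = n"
    and shift: "\<And>j k. Suc k < n \<Longrightarrow> L (j + 1) ! k = L j ! Suc k"
  shows "window (\<lambda>t. L t ! 0) j n = L j"
proof -
  have first: "L (j + int k) ! 0 = L j ! k" if "k < n" for k
    using that
  proof (induction k arbitrary: j)
    case (Suc k)
    have "L (j + int (Suc k)) ! 0 = L ((j + 1) + int k) ! 0" by (simp add: algebra_simps)
    also have "\<dots> = L (j + 1) ! k" using Suc by simp
    also have "\<dots> = L j ! Suc k" using shift Suc by simp
    finally show ?case .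
  qed simp
  show ?thesis by (rule nth_equalityI) (simp_all add: len first)
qed

lemma H_edge_shift:
  assumes "H_edge N \<delta> u v" and "length N \<ge> 2"
  shows "length (fst u) = length N - 1" "length (snd u) = length N - 1"
    "length (fst v) = length N - 1" "length (snd v) = length N - 1"
    "\<And>k. Suc k < length N - 1 \<Longrightarrow> fst v ! k = fst u ! Suc k"
    "\<And>k. Suc k < length N - 1 \<Longrightarrow> snd v ! k = snd u ! Suc k"
  using assms by (auto simp: H_edge_def nth_append)

lemma H_walk_eq_window_pair:
  assumes walk: "H_walk N \<delta> P" and r: "length N \<ge> 2"
  shows "window_pair (\<lambda>t. fst (P t) ! 0) (\<lambda>t. snd (P t) ! 0) (length N - 1) = P"
proof
  fix j
  have edge: "H_edge N \<delta> (P t) (P (t + 1))" for t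
    using walk by (simp add: H_walk_def)
  have "window (\<lambda>t. fst (P t) ! 0) j (length N - 1) = fst (P j)"
    by (rule window_of_shifting_words) (simp_all add: H_edge_shift[OF edge r])
  moreover have "window (\<lambda>t. snd (P t) ! 0) j (length N - 1) = snd (P j)"
    by (rule window_of_shifting_words) (simp_all add: H_edge_shift[OF edge r])
  ultimately show "window_pair (\<lambda>t. fst (P t) ! 0) (\<lambda>t. snd (P t) ! 0) (length N - 1) j = P j"
    by (simp add: window_pair_def)
qed

lemma H_edge_quiescent_loop:
  assumes L: "is_lqca q N \<delta>" and r: "length N \<ge> 2"
  shows "H_edge N \<delta> (replicate (length N - 1) q, replicate (length N - 1) q)
                     (replicate (length N - 1) q, replicate (length N - 1) q)"
proof -
  have "window (\<lambda>_. q) j n = replicate n q" for j n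
    by (rule window_eq_replicate) simp
  then show ?thesis
    using H_edge_window_pair_iff[OF r, of \<delta> "\<lambda>_. q" "\<lambda>_. q" 0] vinner_quiescent[of q]
    by (simp add: window_pair_def is_lqca_quiescent[OF L])
qed

lemma q_cycle_extends_to_H_walk:
  assumes L: "is_lqca q N \<delta>" and r: "length N \<ge> 2" and p: "q_cycle q N \<delta> p"
  obtains P where "H_walk N \<delta> P" and "\<And>i. i < length p \<Longrightarrow> P (int i) = p ! i"
    and "\<And>t. t \<notin> {0..<int (length p)} \<Longrightarrow> P t = (replicate (length N - 1) q, replicate (length N - 1) q)"
proof -
  let ?Q = "(replicate (length N - 1) q, replicate (length N - 1) q)"
  define k where "k = length p - 1"
  have k: "length p = Suc k" using p by (auto simp: q_cycle_def k_def)
  have "p \<noteq> []" using k by auto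
  then have "p ! 0 = hd p" "p ! k = last p"
    using k by (simp_all add: hd_conv_nth last_conv_nth)
  then have ends: "p ! 0 = ?Q" "p ! k = ?Q"
    using p by (simp_all add: q_cycle_def)
  define P where "P t = (if 0 \<le> t \<and> t \<le> int k then p ! nat t else ?Q)" for t
  have trace: "P (int i) = p ! i" if "i < length p" for i
    using that k by (simp add: P_def)
  have outside: "P t = ?Q" if "t \<le> 0 \<or> int k \<le> t" for t
    using that ends by (auto simp: P_def)
  have "H_edge N \<delta> (P t) (P (t + 1))" for t
  proof (cases "0 \<le> t \<and> t < int k")
    case True
    then have "P t = p ! nat t" "P (t + 1) = p ! (nat t + 1)"
      by (auto simp: P_def nat_add_distrib)
    moreover have "H_edge N \<delta> (p ! nat t) (p ! (nat t + 1))"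
      using p True k by (auto simp: q_cycle_def H_path_def)
    ultimately show ?thesis by simp
  next
    case False
    then show ?thesis
      using outside[of t] outside[of "t + 1"] H_edge_quiescent_loop[OF L r] by auto
  qed
  then have "H_walk N \<delta> P" by (simp add: H_walk_def)
  moreover have "P t = ?Q" if "t \<notin> {0..<int (length p)}" for t
    using that k outside by auto
  ultimately show ?thesis using that trace by blast
qed

lemma q_cycle_traced_by_configs:
  assumes L: "is_lqca q N \<delta>" and r: "length N \<ge> 2" and p: "q_cycle q N \<delta> p"
  obtains c c' where "c \<in> configs q" and "c' \<in> configs q"
    and "H_walk N \<delta> (window_pair c c' (length N - 1))"
    and "set p \<subseteq> range (window_pair c c' (length N - 1))"
proof -
  obtain P where walk: "H_walk N \<delta> P" and trace: "\<And>i. i < length p \<Longrightarrow> P (int i) = p ! i"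
    and outside: "\<And>t. t \<notin> {0..<int (length p)} \<Longrightarrow>
                    P t = (replicate (length N - 1) q, replicate (length N - 1) q)"
    using q_cycle_extends_to_H_walk[OF L r p] by blast
  define c where "c t = fst (P t) ! 0" for t
  define c' where "c' t = snd (P t) ! 0" for t
  have P: "window_pair c c' (length N - 1) = P"
    unfolding c_def[abs_def] c'_def[abs_def] using H_walk_eq_window_pair[OF walk r] .
  have "{t. c t \<noteq> q} \<union> {t. c' t \<noteq> q} \<subseteq> {0..<int (length p)}"
    using outside r by (force simp: c_def c'_def)
  then have "c \<in> configs q" "c' \<in> configs q"
    by (auto simp: configs_def intro: finite_subset)
  moreover have "set p \<subseteq> range P"
    using trace by (auto simp: in_set_conv_nth) (metis rangeI)
  ultimately show ?thesis using that walk P by blast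
qed

lemma configs_bounded_support:
  assumes "c \<in> configs q"
  obtains B :: int where "\<And>t. B < \<bar>t\<bar> \<Longrightarrow> c t = q"
proof -
  let ?S = "{t. c t \<noteq> q}"
  have S: "finite ?S" using assms by (simp add: configs_def)
  have "c t = q" if "Max (abs ` ?S) < \<bar>t\<bar>" for t
  proof (rule ccontr)
    assume "c t \<noteq> q"
    then have "\<bar>t\<bar> \<le> Max (abs ` ?S)"
      using S by (intro Max_ge) auto
    with that show False by simp
  qed
  then show ?thesis by (rule that)
qed

lemma q_cycle_through_window_pair:
  assumes c: "c \<in> configs q" and c': "c' \<in> configs q"
    and walk: "H_walk N \<delta> (window_pair c c' (length N - 1))"
  obtains p where "q_cycle q N \<delta> p" and "window_pair c c' (length N - 1) t0 \<in> set p"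
proof -
  let ?n = "length N - 1"
  let ?W = "window_pair c c' ?n"
  obtain B1 B2 where B1: "\<And>t. B1 < \<bar>t\<bar> \<Longrightarrow> c t = q" and B2: "\<And>t. B2 < \<bar>t\<bar> \<Longrightarrow> c' t = q"
    using configs_bounded_support[OF c] configs_bounded_support[OF c'] by metis
  define B where "B = max \<bar>t0\<bar> (max B1 B2)"
  define s where "s = - B - int ?n"
  define e where "e = B + 1"
  have "s \<le> t0" "t0 \<le> e" "s + 1 \<le> e" by (auto simp: s_def e_def B_def)
  have quiescent: "?W t = (replicate ?n q, replicate ?n q)" if "t \<le> s \<or> e \<le> t" for t
  proof -
    have "B < \<bar>t + int k\<bar>" if "k < ?n" for k
      using that \<open>t \<le> s \<or> e \<le> t\<close> by (auto simp: s_def e_def)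
    then show ?thesis
      using B1 B2 by (auto simp: window_pair_def B_def intro!: window_eq_replicate)
  qed
  define p where "p = map ?W [s..e]"
  have nth_p: "p ! i = ?W (s + int i)" if "i < length p" for i
    using that by (simp add: p_def)
  have "H_path N \<delta> p"
    unfolding H_path_def
  proof (intro conjI allI impI)
    show "p \<noteq> []" using \<open>s + 1 \<le> e\<close> by (simp add: p_def)
    fix i assume i: "i + 1 < length p"
    have "H_edge N \<delta> (?W (s + int i)) (?W (s + int i + 1))"
      using walk unfolding H_walk_def by blast
    moreover have "p ! i = ?W (s + int i)" "p ! (i + 1) = ?W (s + int i + 1)"
      using i nth_p[of i] nth_p[of "i + 1"] by (simp_all add: algebra_simps)
    ultimately show "H_edge N \<delta> (p ! i) (p ! (i + 1))" by simp
  qed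
  moreover have "length p \<ge> 2" using \<open>s + 1 \<le> e\<close> by (simp add: p_def)
  moreover have "hd p = ?W s"
    using upto_rec1[of s e] \<open>s + 1 \<le> e\<close> by (simp add: p_def)
  moreover have "last p = ?W e"
    using upto_rec2[of s e] \<open>s + 1 \<le> e\<close> by (simp add: p_def)
  ultimately have "q_cycle q N \<delta> p"
    using quiescent[of s] quiescent[of e] by (simp add: q_cycle_def)
  moreover have "?W t0 \<in> set p"
    using \<open>s \<le> t0\<close> \<open>t0 \<le> e\<close> by (simp add: p_def)
  ultimately show ?thesis by (rule that)
qed

theorem lemma5:
  fixes q :: "'s::finite" and N :: "int list" and \<delta> :: "'s list \<Rightarrow> 's \<Rightarrow> complex"
  assumes "is_lqca q N \<delta>" and "simple_nbhd N" and "length N \<ge> 2"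
  shows "(\<forall>c\<in>configs q. \<forall>c'\<in>configs q. c \<noteq> c' \<longrightarrow> col_inner q N \<delta> c c' = 0)
     \<longleftrightarrow> (\<forall>p. q_cycle q N \<delta> p \<longrightarrow> map fst p = map snd p)"
proof -
  let ?n = "length N - 1"
  show ?thesis
  proof (intro iffI allI impI ballI)
    fix p
    assume orth: "\<forall>c\<in>configs q. \<forall>c'\<in>configs q. c \<noteq> c' \<longrightarrow> col_inner q N \<delta> c c' = 0"
      and p: "q_cycle q N \<delta> p"
    obtain c c' where c: "c \<in> configs q" "c' \<in> configs q"
      and walk: "H_walk N \<delta> (window_pair c c' ?n)" and traced: "set p \<subseteq> range (window_pair c c' ?n)"
      using q_cycle_traced_by_configs[OF assms(1,3) p] by blast
    have "c = c'"
      using orth c walk col_inner_ne_0_iff_H_walk[OF assms c] by blast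
    then show "map fst p = map snd p"
      using traced by (auto simp: window_pair_def)
  next
    fix c c'
    assume cycles: "\<forall>p. q_cycle q N \<delta> p \<longrightarrow> map fst p = map snd p"
      and c: "c \<in> configs q" and c': "c' \<in> configs q" and "c \<noteq> c'"
    then obtain t0 where "c t0 \<noteq> c' t0" by blast
    show "col_inner q N \<delta> c c' = 0"
    proof (rule ccontr)
      assume "col_inner q N \<delta> c c' \<noteq> 0"
      then have "H_walk N \<delta> (window_pair c c' ?n)"
        using col_inner_ne_0_iff_H_walk[OF assms c c'] by blast
      then obtain p where "q_cycle q N \<delta> p" and "window_pair c c' ?n t0 \<in> set p"
        using q_cycle_through_window_pair[OF c c'] by blast
      with cycles have "window c t0 ?n ! 0 = window c' t0 ?n ! 0"
        unfolding window_pair_def by fastforce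
      with \<open>c t0 \<noteq> c' t0\<close> assms(3) show False by simp
    qed
  qed
qed

end
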